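(* Let $q$ be an odd prime power and $d\ge 2$. Let $V$ be a $(2d+1)$-dimensional vector space over $\mathbb{F}_q$ with basis $z,e_0,f_0,x,y,e_1,f_1,\dots,e_{d-2},f_{d-2}$ and nondegenerate symmetric bilinear form $\beta$ with $V=\langle z\rangle\perp\langle e_0,f_0\rangle\perp\langle x,y\rangle\perp\langle e_1,f_1\rangle\perp\cdots\perp\langle e_{d-2},f_{d-2}\rangle$, $\beta(z,z)=1$, $\beta(e_i,f_i)=1$, $\beta(e_i,e_i)=\beta(f_i,f_i)=0$, and $\langle x,y\rangle$ anisotropic; let $\kappa(v)=\beta(v,v)/2$ and $U=\langle x,y,e_1,f_1,\dots,e_{d-2},f_{d-2}\rangle$. Let $M$ be a maximal (a totally singular $d$-dimensional subspace of $V$). Then $M$ has a basis $b_1,\dots,b_d$ of one of the following forms, where $u_1,\dots,u_d\in U$ and $\lambda,\mu\in\mathbb{F}_q$: (i) $b_1=z+u_1$, $b_2=e_0+u_2$, $b_3=f_0+u_3$, $b_i=u_i$ for $4\le i\le d$; (ii) $b_1=z+\lambda f_0+u_1$, $b_2=e_0+\mu f_0+u_2$, $b_i=u_i$ for $3\le i\le d$; (iii) $b_1=z+\lambda e_0+u_1$, $b_2=f_0+u_2$, $b_i=u_i$ for $3\le i\le d$.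
   Context: A subspace is totally singular if $\kappa$ vanishes on all its vectors. *)

theory Defs
  imports Main "HOL-Library.Function_Algebras"
begin

text \<open>Coordinate 0 is z, 1 is e_0, 2 is f_0, 3 is x, 4 is y, and for
  1 <= i <= d-2 coordinate 2i+3 is e_i and 2i+4 is f_i.\<close>

definition vecs :: "nat \<Rightarrow> (nat \<Rightarrow> 'a::field) set" where
  "vecs d = {v. \<forall>i. 2*d+1 \<le> i \<longrightarrow> v i = 0}"

definition unitv :: "nat \<Rightarrow> nat \<Rightarrow> 'a::field" where
  "unitv k = (\<lambda>i. if i = k then 1 else 0)"

definition zv :: "nat \<Rightarrow> 'a::field" where "zv = unitv 0"
definition e0v :: "nat \<Rightarrow> 'a::field" where "e0v = unitv 1"
definition f0v :: "nat \<Rightarrow> 'a::field" where "f0v = unitv 2"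

definition scalev :: "'a::field \<Rightarrow> (nat \<Rightarrow> 'a) \<Rightarrow> (nat \<Rightarrow> 'a)" where
  "scalev c v = (\<lambda>i. c * v i)"

text \<open>The bilinear form beta; a, b, c are the Gram entries
  beta(x,x) = a, beta(x,y) = beta(y,x) = b, beta(y,y) = c.\<close>
definition beta :: "nat \<Rightarrow> 'a \<Rightarrow> 'a \<Rightarrow> 'a \<Rightarrow> (nat \<Rightarrow> 'a::field) \<Rightarrow> (nat \<Rightarrow> 'a) \<Rightarrow> 'a" where
  "beta d a b c v w =
     v 0 * w 0 + (v 1 * w 2 + v 2 * w 1)
     + (a * v 3 * w 3 + b * (v 3 * w 4 + v 4 * w 3) + c * v 4 * w 4)
     + (\<Sum>i\<in>{1..d-2}. v (2*i+3) * w (2*i+4) + v (2*i+4) * w (2*i+3))"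

definition kappa :: "nat \<Rightarrow> 'a \<Rightarrow> 'a \<Rightarrow> 'a \<Rightarrow> (nat \<Rightarrow> 'a::field) \<Rightarrow> 'a" where
  "kappa d a b c v = beta d a b c v v / 2"

definition anisotropic_plane :: "'a::field \<Rightarrow> 'a \<Rightarrow> 'a \<Rightarrow> bool" where
  "anisotropic_plane a b c \<longleftrightarrow>
     (\<forall>s t. a*s*s + 2*b*s*t + c*t*t = 0 \<longrightarrow> s = 0 \<and> t = 0)"

definition Usp :: "nat \<Rightarrow> (nat \<Rightarrow> 'a::field) set" where
  "Usp d = {v \<in> vecs d. v 0 = 0 \<and> v 1 = 0 \<and> v 2 = 0}"

definition is_subspace :: "nat \<Rightarrow> (nat \<Rightarrow> 'a::field) set \<Rightarrow> bool" where
  "is_subspace d W \<longleftrightarrow> W \<subseteq> vecs d \<and> (\<lambda>_. 0) \<in> W \<and>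
     (\<forall>v\<in>W. \<forall>w\<in>W. v + w \<in> W) \<and> (\<forall>c. \<forall>v\<in>W. scalev c v \<in> W)"

definition lincomb :: "(nat \<Rightarrow> 'a::field) \<Rightarrow> (nat \<Rightarrow> 'a) list \<Rightarrow> (nat \<Rightarrow> 'a)" where
  "lincomb cs bs = (\<lambda>i. \<Sum>j<length bs. cs j * (bs ! j) i)"

definition lspan :: "(nat \<Rightarrow> 'a::field) list \<Rightarrow> (nat \<Rightarrow> 'a) set" where
  "lspan bs = {lincomb cs bs | cs. True}"

definition lin_indep :: "(nat \<Rightarrow> 'a::field) list \<Rightarrow> bool" where
  "lin_indep bs \<longleftrightarrow> (\<forall>cs. lincomb cs bs = (\<lambda>_. 0) \<longrightarrow> (\<forall>j<length bs. cs j = 0))"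

definition is_basis_of :: "(nat \<Rightarrow> 'a::field) list \<Rightarrow> (nat \<Rightarrow> 'a) set \<Rightarrow> bool" where
  "is_basis_of bs W \<longleftrightarrow> lin_indep bs \<and> lspan bs = W"

definition totally_singular :: "nat \<Rightarrow> 'a \<Rightarrow> 'a \<Rightarrow> 'a \<Rightarrow> (nat \<Rightarrow> 'a::field) set \<Rightarrow> bool" where
  "totally_singular d a b c W \<longleftrightarrow> (\<forall>v\<in>W. kappa d a b c v = 0)"

definition is_maximal :: "nat \<Rightarrow> 'a \<Rightarrow> 'a \<Rightarrow> 'a \<Rightarrow> (nat \<Rightarrow> 'a::field) set \<Rightarrow> bool" where
  "is_maximal d a b c M \<longleftrightarrow> is_subspace d M \<and> totally_singular d a b c M \<and>
     (\<exists>bs. length bs = d \<and> is_basis_of bs M)"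

end

theory Submission
  imports Defs "HOL-Library.FuncSet" "HOL-Library.Cardinality" "HOL-Library.Product_Plus"
    "HOL-Number_Theory.Residues"
begin

(* Let T = M \<inter> U and let \<pi> : M \<rightarrow> <z, e_0, f_0> be the projection along U, so that T is its
   kernel. U is the orthogonal sum of an anisotropic plane and d - 2 hyperbolic planes, so
   its totally singular subspaces have dimension at most d - 2, and \<pi> has rank 3 or 2.
   In rank 3, lifts of z, e_0, f_0 together with a basis of T give form (i).
   In rank 2, T has dimension exactly d - 2, and the image of \<pi> contains a vector with
   nonzero z-component: otherwise some m \<in> M projects to e_0, the singular vector m - e_0
   of U is orthogonal to T and hence lies in T (which is maximal totally singular in U),
   so e_0 \<in> M, which is impossible because the image also contains a vector with
   nonzero f_0-component. Row reduction of two lifts then gives form (ii) or (iii).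
   Dimensions are never computed directly: a subspace of dimension k over F_q is recognised
   by having q^k elements. *)

subsection \<open>Linear combinations\<close>

lemma lincomb_Nil [simp]: "lincomb cs [] = 0"
  by (simp add: lincomb_def zero_fun_def)

lemma lincomb_Cons: "lincomb cs (x # xs) = scalev (cs 0) x + lincomb (\<lambda>j. cs (Suc j)) xs"
  unfolding lincomb_def scalev_def plus_fun_def length_Cons sum.lessThan_Suc_shift by simp

lemma lincomb_append:
  "lincomb cs (xs @ ys) = lincomb cs xs + lincomb (\<lambda>j. cs (j + length xs)) ys"
  by (induction xs arbitrary: cs) (simp_all add: lincomb_Cons add.assoc)

lemma lincomb_cong:
  "(\<And>j. j < length bs \<Longrightarrow> cs j = cs' j) \<Longrightarrow> lincomb cs bs = lincomb cs' bs"
  unfolding lincomb_def by (intro ext sum.cong) auto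

lemma lincomb_diff: "lincomb (\<lambda>j. cs j - cs' j) bs = lincomb cs bs - lincomb cs' bs"
  unfolding lincomb_def by (auto simp: fun_eq_iff algebra_simps sum_subtractf)

lemma lincomb_mult: "lincomb (\<lambda>j. k * cs j) bs = scalev k (lincomb cs bs)"
  unfolding lincomb_def scalev_def by (auto simp: sum_distrib_left algebra_simps)

lemma lincomb_eq_imp_coeffs_eq:
  assumes "lin_indep bs" "lincomb cs bs = lincomb cs' bs" "j < length bs"
  shows "cs j = cs' j"
  using assms lincomb_diff[of cs cs' bs] unfolding lin_indep_def by (force simp: zero_fun_def)

lemma in_lspan: "x \<in> set bs \<Longrightarrow> x \<in> lspan bs"
proof -
  assume "x \<in> set bs"
  then obtain j where j: "j < length bs" "bs ! j = x"
    by (auto simp: in_set_conv_nth)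
  have "lincomb (\<lambda>i. if i = j then 1 else 0) bs = x"
    using j by (simp add: lincomb_def fun_eq_iff if_distrib[where f="\<lambda>c. c * _"] cong: if_cong)
  then show ?thesis
    unfolding lspan_def by blast
qed

lemma lin_indep_Nil: "lin_indep []"
  by (simp add: lin_indep_def)

lemma lin_indep_Cons:
  assumes indep: "lin_indep bs" and notin: "x \<notin> lspan bs"
  shows "lin_indep (x # bs)"
  unfolding lin_indep_def
proof (intro allI impI)
  fix cs j assume zero: "lincomb cs (x # bs) = (\<lambda>_. 0)" and j: "j < length (x # bs)"
  then have sum0: "scalev (cs 0) x + lincomb (\<lambda>j. cs (Suc j)) bs = 0"
    by (simp add: lincomb_Cons zero_fun_def)
  have "cs 0 = 0"
  proof (rule ccontr)
    assume "cs 0 \<noteq> 0"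
    then have "x = lincomb (\<lambda>j. (- 1 / cs 0) * cs (Suc j)) bs"
      unfolding lincomb_mult using sum0
      by (auto simp: scalev_def fun_eq_iff field_simps eq_neg_iff_add_eq_0 add.commute)
    then show False
      using notin unfolding lspan_def by blast
  qed
  moreover from this have "lincomb (\<lambda>j. cs (Suc j)) bs = (\<lambda>_. 0)"
    using sum0 by (simp add: scalev_def zero_fun_def fun_eq_iff)
  then have "\<forall>i<length bs. cs (Suc i) = 0"
    using indep unfolding lin_indep_def by blast
  ultimately show "cs j = 0"
    using j by (cases j) auto
qed

definition lin_closed :: "(nat \<Rightarrow> 'a::field) set \<Rightarrow> bool" where
  "lin_closed W \<longleftrightarrow> 0 \<in> W \<and> (\<forall>v\<in>W. \<forall>w\<in>W. v + w \<in> W) \<and> (\<forall>c. \<forall>v\<in>W. scalev c v \<in> W)"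

lemma is_subspace_iff: "is_subspace d W \<longleftrightarrow> W \<subseteq> vecs d \<and> lin_closed W"
  by (simp add: is_subspace_def lin_closed_def zero_fun_def)

lemma lin_closed_zero: "lin_closed W \<Longrightarrow> 0 \<in> W"
  and lin_closed_add: "lin_closed W \<Longrightarrow> v \<in> W \<Longrightarrow> w \<in> W \<Longrightarrow> v + w \<in> W"
  and lin_closed_scalev: "lin_closed W \<Longrightarrow> v \<in> W \<Longrightarrow> scalev c v \<in> W"
  by (simp_all add: lin_closed_def)

lemma lin_closed_diff: "lin_closed W \<Longrightarrow> v \<in> W \<Longrightarrow> w \<in> W \<Longrightarrow> v - w \<in> W"
proof -
  assume W: "lin_closed W" "v \<in> W" "w \<in> W"
  have "v - w = v + scalev (- 1) w"
    by (simp add: scalev_def fun_eq_iff)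
  then show ?thesis
    using W by (metis lin_closed_add lin_closed_scalev)
qed

lemma lin_closed_Int: "lin_closed V \<Longrightarrow> lin_closed W \<Longrightarrow> lin_closed (V \<inter> W)"
  by (simp add: lin_closed_def)

lemma lin_closed_coord_zero: "lin_closed W \<Longrightarrow> lin_closed {w \<in> W. w k = 0}"
  by (simp add: lin_closed_def scalev_def)

lemma lin_closed_image:
  assumes "lin_closed W" "f 0 = 0" "\<And>v w. f (v + w) = f v + f w" "\<And>c v. f (scalev c v) = scalev c (f v)"
  shows "lin_closed (f ` W)"
  unfolding lin_closed_def
proof (intro conjI ballI allI)
  show "0 \<in> f ` W"
    using assms(1,2) by (metis image_eqI lin_closed_zero)
next
  fix v w assume "v \<in> f ` W" "w \<in> f ` W"
  then show "v + w \<in> f ` W"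
    using assms(1) by (auto simp flip: assms(3) intro: lin_closed_add)
next
  fix c v assume "v \<in> f ` W"
  then show "scalev c v \<in> f ` W"
    using assms(1) by (auto simp flip: assms(4) intro: lin_closed_scalev)
qed

lemma lincomb_in_lin_closed: "lin_closed W \<Longrightarrow> set bs \<subseteq> W \<Longrightarrow> lincomb cs bs \<in> W"
  by (induction bs arbitrary: cs) (simp_all add: lincomb_Cons lin_closed_def)

lemma lspan_subset: "lin_closed W \<Longrightarrow> set bs \<subseteq> W \<Longrightarrow> lspan bs \<subseteq> W"
  unfolding lspan_def using lincomb_in_lin_closed by blast

definition span_insert :: "(nat \<Rightarrow> 'a::field) set \<Rightarrow> (nat \<Rightarrow> 'a) \<Rightarrow> (nat \<Rightarrow> 'a) set" where
  "span_insert T u = (\<lambda>(t, s). t + scalev s u) ` (T \<times> UNIV)"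

lemma lin_closed_span_insert:
  assumes T: "lin_closed T"
  shows "lin_closed (span_insert T u)"
  unfolding lin_closed_def span_insert_def
proof (intro conjI ballI allI)
  have "(0 :: nat \<Rightarrow> 'a) = (\<lambda>(t, s). t + scalev s u) (0, 0)"
    by (simp add: scalev_def fun_eq_iff)
  moreover have "(0, 0) \<in> T \<times> UNIV"
    using lin_closed_zero[OF T] by simp
  ultimately show "0 \<in> (\<lambda>(t, s). t + scalev s u) ` (T \<times> UNIV)"
    by (rule image_eqI)
next
  fix v w assume "v \<in> (\<lambda>(t, s). t + scalev s u) ` (T \<times> UNIV)" "w \<in> (\<lambda>(t, s). t + scalev s u) ` (T \<times> UNIV)"
  then obtain t s t' s' where "v = t + scalev s u" "w = t' + scalev s' u" "t \<in> T" "t' \<in> T"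
    by auto
  then have "v + w = (\<lambda>(t, s). t + scalev s u) (t + t', s + s')" "(t + t', s + s') \<in> T \<times> UNIV"
    using lin_closed_add[OF T] by (auto simp: scalev_def fun_eq_iff algebra_simps)
  then show "v + w \<in> (\<lambda>(t, s). t + scalev s u) ` (T \<times> UNIV)"
    by (rule image_eqI)
next
  fix k v assume "v \<in> (\<lambda>(t, s). t + scalev s u) ` (T \<times> UNIV)"
  then obtain t s where "v = t + scalev s u" "t \<in> T"
    by auto
  then have "scalev k v = (\<lambda>(t, s). t + scalev s u) (scalev k t, k * s)" "(scalev k t, k * s) \<in> T \<times> UNIV"
    using lin_closed_scalev[OF T] by (auto simp: scalev_def fun_eq_iff algebra_simps)
  then show "scalev k v \<in> (\<lambda>(t, s). t + scalev s u) ` (T \<times> UNIV)"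
    by (rule image_eqI)
qed

lemma card_span_insert:
  fixes u :: "nat \<Rightarrow> 'a::field"
  assumes T: "lin_closed T" and u: "u \<notin> T"
  shows "card (span_insert T u) = card T * CARD('a)"
proof -
  have "inj_on (\<lambda>(t, s). t + scalev s u) (T \<times> (UNIV :: 'a set))"
  proof (rule inj_onI, clarify)
    fix t s t' s' assume ts: "t + scalev s u = t' + scalev s' u" "t \<in> T" "t' \<in> T"
    have "s = s'"
    proof (rule ccontr)
      assume "s \<noteq> s'"
      have "t i + s * u i = t' i + s' * u i" for i
        using fun_cong[OF ts(1), of i] by (simp add: scalev_def)
      then have "u = scalev (1 / (s - s')) (t' - t)"
        using \<open>s \<noteq> s'\<close> by (auto simp: scalev_def fun_eq_iff field_simps)
      then show False
        using u ts(2,3) lin_closed_scalev[OF T] lin_closed_diff[OF T] by metis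
    qed
    then show "t = t' \<and> s = s'"
      using ts(1) by simp
  qed
  then show ?thesis
    unfolding span_insert_def by (simp add: card_image card_cartesian_product)
qed

subsection \<open>Counting over a finite field\<close>

lemma one_less_card_field: "1 < card (UNIV :: 'a::{field,finite} set)"
proof -
  have "card {0::'a, 1} \<le> CARD('a)"
    by (rule card_mono) auto
  then show ?thesis
    by simp
qed

lemma field_power_le_imp_le:
  "card (UNIV :: 'a::{field,finite} set) ^ m \<le> CARD('a) ^ n \<Longrightarrow> m \<le> n"
  using one_less_card_field[where 'a='a] by (metis power_le_imp_le_exp)

lemma two_neq_zero_if_odd_card:
  assumes "odd (card (UNIV :: 'a::{field,finite} set))"
  shows "(2::'a) \<noteq> 0"
proof
  assume "(2::'a) = 0"
  then have "CHAR('a) dvd 2"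
    by (metis of_nat_eq_0_iff_char_dvd of_nat_numeral)
  then have "CHAR('a) = 2"
    using dvd_imp_le[of "CHAR('a)" 2] CHAR_not_1'[where 'a='a] by (cases "CHAR('a)") auto
  then show False
    using CHAR_dvd_CARD[where 'a='a] assms by simp
qed

lemma card_lspan:
  fixes bs :: "(nat \<Rightarrow> 'a::{field,finite}) list"
  assumes indep: "lin_indep bs"
  shows "card (lspan bs) = CARD('a) ^ length bs"
proof -
  define P where "P = PiE {..<length bs} (\<lambda>_. UNIV :: 'a set)"
  have "lspan bs = (\<lambda>cs. lincomb cs bs) ` P"
  proof
    show "lspan bs \<subseteq> (\<lambda>cs. lincomb cs bs) ` P"
    proof
      fix v assume "v \<in> lspan bs"
      then obtain cs where "v = lincomb cs bs"
        unfolding lspan_def by auto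
      then have "v = lincomb (restrict cs {..<length bs}) bs"
        by (auto intro: lincomb_cong)
      moreover have "restrict cs {..<length bs} \<in> P"
        unfolding P_def by auto
      ultimately show "v \<in> (\<lambda>cs. lincomb cs bs) ` P"
        by blast
    qed
  qed (auto simp: lspan_def)
  moreover have "inj_on (\<lambda>cs. lincomb cs bs) P"
    using lincomb_eq_imp_coeffs_eq[OF indep] unfolding P_def by (intro inj_onI PiE_ext) auto
  ultimately show ?thesis
    unfolding P_def by (simp add: card_image card_PiE)
qed

text \<open>The induction terminates because each extension multiplies the size of the span by
  CARD('a), so the length of the list stays below card W.\<close>

lemma lin_indep_extend_to_basis:
  fixes W :: "(nat \<Rightarrow> 'a::{field,finite}) set"
  assumes "finite W" "lin_closed W" "lin_indep bs" "set bs \<subseteq> W"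
  shows "\<exists>xs. set xs \<subseteq> W \<and> lin_indep (xs @ bs) \<and> lspan (xs @ bs) = W"
  using assms(3,4)
proof (induction "card W - length bs" arbitrary: bs rule: less_induct)
  case less
  show ?case
  proof (cases "lspan bs = W")
    case True
    then show ?thesis
      using less.prems by (intro exI[of _ "[]"]) auto
  next
    case False
    then obtain x where x: "x \<in> W" "x \<notin> lspan bs"
      using lspan_subset[OF assms(2) less.prems(2)] by auto
    have indep: "lin_indep (x # bs)" and sub: "set (x # bs) \<subseteq> W"
      using lin_indep_Cons[OF less.prems(1) x(2)] x less.prems by auto
    have "length (x # bs) < 2 ^ length (x # bs)"
      by (rule less_exp)
    also have "\<dots> \<le> CARD('a) ^ length (x # bs)"
      using one_less_card_field[where 'a='a] by (intro power_mono) auto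
    also have "\<dots> = card (lspan (x # bs))"
      using card_lspan[OF indep] by simp
    also have "\<dots> \<le> card W"
      using lspan_subset[OF assms(2) sub] assms(1) by (intro card_mono)
    finally have "card W - length (x # bs) < card W - length bs"
      by simp
    from less.hyps[OF this indep sub] obtain xs where
      "set xs \<subseteq> W" "lin_indep (xs @ x # bs)" "lspan (xs @ x # bs) = W"
      by blast
    then show ?thesis
      using x by (intro exI[of _ "xs @ [x]"]) auto
  qed
qed

lemma lin_closed_has_basis:
  fixes W :: "(nat \<Rightarrow> 'a::{field,finite}) set"
  assumes "finite W" "lin_closed W"
  obtains bs where "lin_indep bs" "lspan bs = W"
  using lin_indep_extend_to_basis[OF assms lin_indep_Nil] by auto

lemma finite_vecs: "finite (vecs d :: (nat \<Rightarrow> 'a::{field,finite}) set)"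
proof -
  let ?N = "{..<2*d+1}"
  have "vecs d \<subseteq> (\<lambda>f i. if i \<in> ?N then f i else 0) ` PiE ?N (\<lambda>_. UNIV :: 'a set)"
  proof
    fix v :: "nat \<Rightarrow> 'a" assume "v \<in> vecs d"
    then have "v = (\<lambda>f i. if i \<in> ?N then f i else 0) (restrict v ?N)"
      by (simp add: vecs_def fun_eq_iff not_less)
    moreover have "restrict v ?N \<in> PiE ?N (\<lambda>_. UNIV)"
      by simp
    ultimately show "v \<in> (\<lambda>f i. if i \<in> ?N then f i else 0) ` PiE ?N (\<lambda>_. UNIV)"
      by blast
  qed
  then show ?thesis
    by (rule finite_subset) (simp add: finite_PiE)
qed

text \<open>Counting form of the first isomorphism theorem: the fibres of h over G are the cosets
  of its kernel.\<close>

lemma card_eq_card_image_mult_card_kernel: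
  fixes h :: "'a::ab_group_add \<Rightarrow> 'b::ab_group_add"
  assumes fin: "finite G" and diff: "\<And>x y. x \<in> G \<Longrightarrow> y \<in> G \<Longrightarrow> x - y \<in> G"
    and hom: "\<And>x y. h (x - y) = h x - h y"
  shows "card G = card (h ` G) * card {x \<in> G. h x = 0}"
proof -
  have fibre: "card {x \<in> G. h x = h y} = card {x \<in> G. h x = 0}" if y: "y \<in> G" for y
  proof (rule bij_betw_same_card[of "\<lambda>x. x - y"])
    have "x + y \<in> G" if "x \<in> G" for x
      using diff[OF that diff[OF diff[OF y y] y]] by simp
    moreover have "h (x + y) = h x + h y" for x
      using hom[of "x + y" y] by (simp add: algebra_simps)
    ultimately show "bij_betw (\<lambda>x. x - y) {x \<in> G. h x = h y} {x \<in> G. h x = 0}"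
      using diff[OF _ y] hom by (intro bij_betw_byWitness[where f'="\<lambda>x. x + y"]) auto
  qed
  have "card G = (\<Sum>z\<in>h ` G. card {x \<in> G. h x = z})"
    using sum.group[where S=G and T="h ` G" and g=h and h="\<lambda>_. 1::nat"] fin by simp
  also have "\<dots> = (\<Sum>z\<in>h ` G. card {x \<in> G. h x = 0})"
    using fibre by (intro sum.cong) auto
  finally show ?thesis
    by simp
qed

lemma card_le_card_coord_zero:
  fixes T :: "(nat \<Rightarrow> 'a::{field,finite}) set"
  assumes "finite T" "lin_closed T"
  shows "card T \<le> card {t \<in> T. t k = 0} * CARD('a)"
proof -
  have "card T = card ((\<lambda>t. t k) ` T) * card {t \<in> T. t k = 0}"
    using assms by (intro card_eq_card_image_mult_card_kernel) (auto intro: lin_closed_diff)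
  also have "\<dots> \<le> CARD('a) * card {t \<in> T. t k = 0}"
    by (intro mult_right_mono card_mono) auto
  finally show ?thesis
    by (simp add: mult.commute)
qed

subsection \<open>Totally singular subspaces of U\<close>

lemma singular_imp_orthogonal:
  fixes B :: "(nat \<Rightarrow> 'a::field) \<Rightarrow> (nat \<Rightarrow> 'a) \<Rightarrow> 'a"
  assumes two: "(2::'a) \<noteq> 0" and W: "lin_closed W" "\<forall>w\<in>W. B w w = 0"
    and add: "\<And>u v w. B (u + v) w = B u w + B v w" and sym: "\<And>v w. B v w = B w v"
    and vw: "v \<in> W" "w \<in> W"
  shows "B v w = 0"
proof -
  have "B (v + w) (v + w) = B v v + B w w + 2 * B v w"
    using add sym by (simp add: algebra_simps)
  then have "2 * B v w = 0"
    using W vw by (simp add: lin_closed_add)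
  then show ?thesis
    using two by simp
qed

text \<open>The pair with index i sits in coordinates 2i+3 and 2i+4, so
  I must avoid 0, whose coordinates are those of x and y.\<close>

definition U_of :: "nat set \<Rightarrow> (nat \<Rightarrow> 'a::zero) set" where
  "U_of I = {v. \<forall>k. v k \<noteq> 0 \<longrightarrow> k = 3 \<or> k = 4 \<or> (\<exists>i\<in>I. k = 2*i+3 \<or> k = 2*i+4)}"

definition beta_U :: "'a \<Rightarrow> 'a \<Rightarrow> 'a \<Rightarrow> nat set \<Rightarrow> (nat \<Rightarrow> 'a::field) \<Rightarrow> (nat \<Rightarrow> 'a) \<Rightarrow> 'a" where
  "beta_U a b c I v w = (a * v 3 * w 3 + b * (v 3 * w 4 + v 4 * w 3) + c * v 4 * w 4)
    + (\<Sum>i\<in>I. v (2*i+3) * w (2*i+4) + v (2*i+4) * w (2*i+3))"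

definition drop_pair :: "nat \<Rightarrow> (nat \<Rightarrow> 'a::zero) \<Rightarrow> nat \<Rightarrow> 'a" where
  "drop_pair j v = (\<lambda>k. if k = 2*j+3 \<or> k = 2*j+4 then 0 else v k)"

lemma beta_U_add_left: "beta_U a b c I (u + v) w = beta_U a b c I u w + beta_U a b c I v w"
  by (simp add: beta_U_def sum.distrib algebra_simps)

lemma beta_U_sym: "beta_U a b c I v w = beta_U a b c I w v"
  by (simp add: beta_U_def algebra_simps)

lemma beta_U_unit:
  assumes "j \<in> I" "finite I" "0 \<notin> I"
  shows "beta_U a b c I v (unitv (2*j+3)) = v (2*j+4)"
proof -
  have "(\<Sum>i\<in>I. v (2*i+3) * unitv (2*j+3) (2*i+4) + v (2*i+4) * unitv (2*j+3) (2*i+3))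
      = (\<Sum>i\<in>I. if i = j then v (2*j+4) else 0)"
    by (rule sum.cong) (auto simp: unitv_def)
  moreover have "j \<noteq> 0"
    using assms by metis
  ultimately show ?thesis
    using assms unfolding beta_U_def by (simp add: unitv_def)
qed

lemma beta_U_insert:
  assumes "finite I" "j \<notin> I"
  shows "beta_U a b c (insert j I) v w
    = beta_U a b c I v w + (v (2*j+3) * w (2*j+4) + v (2*j+4) * w (2*j+3))"
  using assms by (simp add: beta_U_def algebra_simps)

lemma beta_U_drop_pair:
  assumes "j \<notin> I" "j \<noteq> 0"
  shows "beta_U a b c I (drop_pair j v) (drop_pair j w) = beta_U a b c I v w"
proof -
  have "(\<Sum>i\<in>I. drop_pair j v (2*i+3) * drop_pair j w (2*i+4) + drop_pair j v (2*i+4) * drop_pair j w (2*i+3))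
      = (\<Sum>i\<in>I. v (2*i+3) * w (2*i+4) + v (2*i+4) * w (2*i+3))"
    using assms(1) by (intro sum.cong) (auto simp: drop_pair_def, presburger+)
  then show ?thesis
    using assms(2) unfolding beta_U_def by (simp add: drop_pair_def)
qed

lemma drop_pair_U_of: "v \<in> U_of (insert j I) \<Longrightarrow> drop_pair j v \<in> U_of I"
  unfolding U_of_def drop_pair_def by auto

lemma lin_closed_drop_pair_image: "lin_closed T \<Longrightarrow> lin_closed (drop_pair j ` T)"
  by (rule lin_closed_image) (auto simp: drop_pair_def scalev_def fun_eq_iff)

lemma inj_on_drop_pair:
  assumes S: "lin_closed S" "\<forall>s\<in>S. s (2*j+4) = 0" and e: "unitv (2*j+3) \<notin> S"
  shows "inj_on (drop_pair j) S"
proof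
  fix t s assume ts: "t \<in> S" "s \<in> S" "drop_pair j t = drop_pair j s"
  have agree: "t k = s k" if "k \<noteq> 2*j+3" for k
  proof (cases "k = 2*j+4")
    case True
    have "t (2*j+4) = 0" "s (2*j+4) = 0"
      using S(2) ts(1,2) by blast+
    then show ?thesis
      using True by simp
  next
    case False
    then show ?thesis
      using fun_cong[OF ts(3), of k] that by (simp add: drop_pair_def)
  qed
  define r where "r = t - s"
  have r: "r \<in> S" "\<And>k. k \<noteq> 2*j+3 \<Longrightarrow> r k = 0"
    using ts S agree unfolding r_def by (auto simp: lin_closed_diff)
  have "r (2*j+3) = 0"
  proof (rule ccontr)
    assume "r (2*j+3) \<noteq> 0"
    then have "scalev (1 / r (2*j+3)) r = unitv (2*j+3)"
      using r(2) by (auto simp: scalev_def unitv_def fun_eq_iff)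
    then show False
      using e lin_closed_scalev[OF S(1) r(1)] by metis
  qed
  then show "t = s"
    using r(2) unfolding r_def by (metis eq_iff_diff_eq_0 ext fun_diff_def)
qed

lemma card_le_card_drop_pair:
  fixes T :: "(nat \<Rightarrow> 'a::{field,finite}) set"
  assumes two: "(2::'a) \<noteq> 0" and I: "finite I" "j \<notin> I" "0 \<notin> insert j I"
    and T: "finite T" "lin_closed T" "\<forall>t\<in>T. beta_U a b c (insert j I) t t = 0"
  shows "card T \<le> card (drop_pair j ` {t \<in> T. t (2*j+4) = 0}) * CARD('a)"
proof (cases "\<exists>w\<in>T. w (2*j+4) \<noteq> 0")
  case True
  then obtain w where w: "w \<in> T" "w (2*j+4) \<noteq> 0"
    by blast
  have "unitv (2*j+3) \<notin> T"
  proof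
    assume "unitv (2*j+3) \<in> T"
    then have "beta_U a b c (insert j I) w (unitv (2*j+3)) = 0"
      using singular_imp_orthogonal[OF two T(2,3) beta_U_add_left beta_U_sym w(1)] by blast
    then show False
      using w(2) I by (simp add: beta_U_unit)
  qed
  then have "inj_on (drop_pair j) {t \<in> T. t (2*j+4) = 0}"
    by (intro inj_on_drop_pair lin_closed_coord_zero T) auto
  then show ?thesis
    using card_le_card_coord_zero[OF T(1,2), of "2*j+4"] by (simp add: card_image)
next
  case False
  let ?T2 = "{t \<in> T. t (2*j+3) = 0}"
  have "inj_on (drop_pair j) ?T2"
    using False by (intro inj_on_drop_pair lin_closed_coord_zero T) (auto simp: unitv_def)
  then have "card ?T2 \<le> card (drop_pair j ` {t \<in> T. t (2*j+4) = 0})"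
    using False T(1) by (auto simp: card_image[symmetric] intro!: card_mono)
  then show ?thesis
    using card_le_card_coord_zero[OF T(1,2), of "2*j+3"] by (meson le_trans mult_le_mono1)
qed

text \<open>The Witt index of U_of I is card I: one hyperbolic pair is removed at a time, and
  the anisotropic plane contributes nothing.\<close>

lemma card_totally_singular_U_of_le:
  fixes T :: "(nat \<Rightarrow> 'a::{field,finite}) set"
  assumes aniso: "anisotropic_plane a b c" and two: "(2::'a) \<noteq> 0" and "finite I" "0 \<notin> I"
    and "finite T" "lin_closed T" "T \<subseteq> U_of I" "\<forall>t\<in>T. beta_U a b c I t t = 0"
  shows "card T \<le> CARD('a) ^ card I"
  using assms(3-)
proof (induction I arbitrary: T rule: finite_induct)
  case empty
  have "T \<subseteq> {0}"
  proof
    fix t assume t: "t \<in> T"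
    then have "a * t 3 * t 3 + 2 * b * t 3 * t 4 + c * t 4 * t 4 = 0"
      using empty.prems unfolding beta_U_def by (simp add: algebra_simps)
    then have "t 3 = 0 \<and> t 4 = 0"
      using aniso unfolding anisotropic_plane_def by blast
    then show "t \<in> {0}"
      using empty.prems t unfolding U_of_def by (auto simp: fun_eq_iff)
  qed
  then show ?case
    using card_mono[of "{0}" T] by simp
next
  case (insert j I)
  let ?T' = "drop_pair j ` {t \<in> T. t (2*j+4) = 0}"
  have "card ?T' \<le> CARD('a) ^ card I"
  proof (rule insert.IH)
    show "finite ?T'" "lin_closed ?T'"
      using insert.prems by (simp_all add: lin_closed_drop_pair_image lin_closed_coord_zero)
    show "?T' \<subseteq> U_of I"
      using insert.prems(4) drop_pair_U_of by blast
    show "\<forall>t\<in>?T'. beta_U a b c I t t = 0"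
      using insert insert.prems(5) by (auto simp: beta_U_drop_pair beta_U_insert)
  qed (use insert.prems in simp)
  then show ?case
    using card_le_card_drop_pair[OF two insert.hyps(1,2) insert.prems(1) insert.prems(2,3,5)] insert.hyps
    by (simp add: le_trans)
qed

subsection \<open>Coordinates of V and the form beta\<close>

lemma beta_add_left: "beta d a b c (u + v) w = beta d a b c u w + beta d a b c v w"
  by (simp add: beta_def sum.distrib algebra_simps)

lemma beta_sym: "beta d a b c v w = beta d a b c w v"
  by (simp add: beta_def algebra_simps)

lemma beta_diff_left: "beta d a b c (u - v) w = beta d a b c u w - beta d a b c v w"
  by (simp add: beta_def sum_subtractf algebra_simps)

lemma beta_scalev_left: "beta d a b c (scalev k v) w = k * beta d a b c v w"
  by (simp add: beta_def scalev_def sum_distrib_left algebra_simps)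

lemma beta_add_right: "beta d a b c w (u + v) = beta d a b c w u + beta d a b c w v"
  by (simp add: beta_def sum.distrib algebra_simps)

lemma beta_diff_right: "beta d a b c w (u - v) = beta d a b c w u - beta d a b c w v"
  by (simp add: beta_def sum_subtractf algebra_simps)

lemma beta_scalev_right: "beta d a b c w (scalev k v) = k * beta d a b c w v"
  by (simp add: beta_def scalev_def sum_distrib_left algebra_simps)


definition zef_coords :: "(nat \<Rightarrow> 'a) \<Rightarrow> 'a \<times> 'a \<times> 'a" where
  "zef_coords v = (v 0, v 1, v 2)"

lemma zef_coords_eq_0_iff: "zef_coords v = 0 \<longleftrightarrow> v 0 = 0 \<and> v 1 = 0 \<and> v 2 = 0"
  by (simp add: zef_coords_def zero_prod_def)

lemma zv_apply [simp]: "zv i = (if i = 0 then 1 else 0)"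
  and e0v_apply [simp]: "e0v i = (if i = 1 then 1 else 0)"
  and f0v_apply [simp]: "f0v i = (if i = 2 then 1 else 0)"
  by (simp_all add: zv_def e0v_def f0v_def unitv_def)

lemma zef_coords_zero [simp]: "zef_coords 0 = 0"
  by (simp add: zef_coords_def zero_prod_def)

lemma zef_coords_add [simp]: "zef_coords (v + w) = zef_coords v + zef_coords w"
  and zef_coords_diff [simp]: "zef_coords (v - w) = zef_coords v - zef_coords w"
  and zef_coords_scalev [simp]: "zef_coords (scalev k v) = (k * v 0, k * v 1, k * v 2)"
  and zef_coords_zv [simp]: "zef_coords zv = (1, 0, 0)"
  and zef_coords_e0v [simp]: "zef_coords e0v = (0, 1, 0)"
  and zef_coords_f0v [simp]: "zef_coords f0v = (0, 0, 1)"
  by (simp_all add: zef_coords_def scalev_def zv_def e0v_def f0v_def unitv_def)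

lemma beta_e0v: "beta d a b c e0v w = w 2"
  by (simp add: beta_def)

lemma Usp_iff: "v \<in> Usp d \<longleftrightarrow> v \<in> vecs d \<and> zef_coords v = 0"
  by (simp add: Usp_def zef_coords_eq_0_iff)

lemma vecs_add: "v \<in> vecs d \<Longrightarrow> w \<in> vecs d \<Longrightarrow> v + w \<in> vecs d"
  and vecs_diff: "v \<in> vecs d \<Longrightarrow> w \<in> vecs d \<Longrightarrow> v - w \<in> vecs d"
  and vecs_scalev: "v \<in> vecs d \<Longrightarrow> scalev k v \<in> vecs d"
  by (simp_all add: vecs_def scalev_def)

lemma zv_e0v_f0v_vecs: "1 \<le> d \<Longrightarrow> zv \<in> vecs d \<and> e0v \<in> vecs d \<and> f0v \<in> vecs d"
  by (simp add: vecs_def zv_def e0v_def f0v_def unitv_def)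

lemma lin_closed_Usp: "lin_closed (Usp d)"
  by (auto simp: lin_closed_def Usp_def vecs_def scalev_def)

lemma Usp_subset_U_of: "Usp d \<subseteq> U_of {1..d-2}"
proof
  fix v :: "nat \<Rightarrow> 'a" assume v: "v \<in> Usp d"
  show "v \<in> U_of {1..d-2}"
    unfolding U_of_def
  proof (intro CollectI allI impI)
    fix k assume k: "v k \<noteq> 0"
    have v0: "v 0 = 0" "v 1 = 0" "v 2 = 0" and vd: "\<And>i. 2*d+1 \<le> i \<Longrightarrow> v i = 0"
      using v by (auto simp: Usp_def vecs_def)
    have "k \<noteq> 0" "k \<noteq> 1" "k \<noteq> 2"
      using k v0 by (metis, metis, metis)
    moreover have "k < 2*d+1"
      using k vd not_less by blast
    ultimately have "3 \<le> k" "k < 2*d+1"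
      by auto
    then have "k = 3 \<or> k = 4 \<or> (\<exists>i. 1 \<le> i \<and> i \<le> d-2 \<and> (k = 2*i+3 \<or> k = 2*i+4))"
      by presburger
    then show "k = 3 \<or> k = 4 \<or> (\<exists>i\<in>{1..d-2}. k = 2*i+3 \<or> k = 2*i+4)"
      by auto
  qed
qed

lemma beta_eq_beta_U: "v \<in> Usp d \<Longrightarrow> w \<in> Usp d \<Longrightarrow> beta d a b c v w = beta_U a b c {1..d-2} v w"
  by (simp add: Usp_def beta_def beta_U_def)

lemma card_totally_singular_Usp_le:
  fixes S :: "(nat \<Rightarrow> 'a::{field,finite}) set"
  assumes "anisotropic_plane a b c" "(2::'a) \<noteq> 0"
    and S: "lin_closed S" "S \<subseteq> Usp d" "\<forall>t\<in>S. beta d a b c t t = 0"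
  shows "card S \<le> CARD('a) ^ (d - 2)"
proof -
  have "S \<subseteq> vecs d"
    using S(2) by (auto simp: Usp_def)
  then have "finite S"
    using finite_vecs finite_subset by blast
  moreover have "\<forall>t\<in>S. beta_U a b c {1..d-2} t t = 0"
    using S by (metis beta_eq_beta_U subsetD)
  moreover have "S \<subseteq> U_of {1..d-2}"
    using S(2) Usp_subset_U_of by blast
  ultimately have "card S \<le> CARD('a) ^ card {1..d-2}"
    using assms by (intro card_totally_singular_U_of_le) auto
  then show ?thesis
    by simp
qed

lemma exists_Usp_offsets:
  assumes "\<forall>i<d. bs ! i \<in> vecs d \<and> hs i \<in> vecs d \<and> zef_coords (bs ! i) = zef_coords (hs i)"
  shows "\<exists>u. (\<forall>i<d. u i \<in> Usp d) \<and> (\<forall>i<d. bs ! i = hs i + u i)"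
  using assms by (intro exI[of _ "\<lambda>i. bs ! i - hs i"]) (simp add: Usp_iff vecs_diff)

subsection \<open>Maximal totally singular subspaces of V\<close>

locale maximal_subspace =
  fixes a b c :: "'q::{field,finite}" and d :: nat and M :: "(nat \<Rightarrow> 'q) set"
  assumes odd_card: "odd CARD('q)"
    and two_le_d: "2 \<le> d"
    and aniso: "anisotropic_plane a b c"
    and maximal: "is_maximal d a b c M"
begin

lemma two_neq_zero: "(2::'q) \<noteq> 0"
  using odd_card by (rule two_neq_zero_if_odd_card)

lemma lin_closed_M: "lin_closed M"
  and M_subset_vecs: "M \<subseteq> vecs d"
  using maximal by (simp_all add: is_maximal_def is_subspace_iff)

lemma zv_vecs: "(zv :: nat \<Rightarrow> 'q) \<in> vecs d"
  and e0v_vecs: "(e0v :: nat \<Rightarrow> 'q) \<in> vecs d"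
  and f0v_vecs: "(f0v :: nat \<Rightarrow> 'q) \<in> vecs d"
  using zv_e0v_f0v_vecs[where 'a='q, of d] two_le_d by auto

lemma finite_M: "finite M"
  using M_subset_vecs finite_vecs by (rule finite_subset)

lemma card_M: "card M = CARD('q) ^ d"
  using maximal card_lspan by (force simp: is_maximal_def is_basis_of_def)

lemma beta_M_eq_0:
  assumes "v \<in> M" "w \<in> M"
  shows "beta d a b c v w = 0"
proof -
  have "\<forall>w\<in>M. beta d a b c w w = 0"
    using maximal two_neq_zero by (auto simp: is_maximal_def totally_singular_def kappa_def)
  then show ?thesis
    using singular_imp_orthogonal[OF two_neq_zero lin_closed_M _ beta_add_left beta_sym] assms
    by blast
qed

lemma lin_closed_M_Int_Usp: "lin_closed (M \<inter> Usp d)"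
  using lin_closed_Int[OF lin_closed_M lin_closed_Usp] .

lemma card_M_Int_Usp_le: "card (M \<inter> Usp d) \<le> CARD('q) ^ (d - 2)"
  using aniso two_neq_zero lin_closed_M_Int_Usp beta_M_eq_0
  by (intro card_totally_singular_Usp_le) auto

lemma card_M_eq_card_zef_image_mult: "card M = card (zef_coords ` M) * card (M \<inter> Usp d)"
proof -
  have "card M = card (zef_coords ` M) * card {v \<in> M. zef_coords v = 0}"
    by (rule card_eq_card_image_mult_card_kernel[OF finite_M lin_closed_diff[OF lin_closed_M]])
      (simp_all add: zef_coords_def)
  moreover have "{v \<in> M. zef_coords v = 0} = M \<inter> Usp d"
    using M_subset_vecs by (auto simp: Usp_iff)
  ultimately show ?thesis
    by simp
qed

text \<open>If M \<inter> U has the largest possible size, then it is a maximal totally singular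
  subspace of U, so it absorbs every singular vector of U orthogonal to it.\<close>

lemma singular_orthogonal_in_M:
  assumes card: "card (M \<inter> Usp d) = CARD('q) ^ (d - 2)"
    and u: "u \<in> Usp d" "beta d a b c u u = 0" "\<forall>t\<in>M \<inter> Usp d. beta d a b c u t = 0"
  shows "u \<in> M"
proof (rule ccontr)
  assume "u \<notin> M"
  let ?S = "span_insert (M \<inter> Usp d) u"
  have "?S \<subseteq> Usp d"
    unfolding span_insert_def
  proof clarify
    fix t s assume "t \<in> M" "t \<in> Usp d"
    then show "t + scalev s u \<in> Usp d"
      using lin_closed_add[OF lin_closed_Usp] lin_closed_scalev[OF lin_closed_Usp u(1)] by blast
  qed
  moreover have "\<forall>v\<in>?S. beta d a b c v v = 0"
    unfolding span_insert_def
  proof clarify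
    fix t s assume "t \<in> M" "t \<in> Usp d"
    then have "beta d a b c t t = 0" "beta d a b c u t = 0" "beta d a b c t u = 0"
      using u(3) beta_M_eq_0 beta_sym[of d a b c t u] by auto
    then show "beta d a b c (t + scalev s u) (t + scalev s u) = 0"
      using u(2) by (simp add: beta_add_left beta_add_right beta_scalev_left beta_scalev_right)
  qed
  ultimately have "card ?S \<le> CARD('q) ^ (d - 2)"
    using aniso two_neq_zero lin_closed_span_insert[OF lin_closed_M_Int_Usp]
    by (intro card_totally_singular_Usp_le)
  moreover have "card ?S = CARD('q) ^ (d - 2) * CARD('q)"
    using card_span_insert[OF lin_closed_M_Int_Usp] \<open>u \<notin> M\<close> card by simp
  ultimately show False
    using one_less_card_field[where 'a='q] by simp
qed

lemma e0_lift_imp_f0_coord_eq_0: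
  assumes card: "card (M \<inter> Usp d) = CARD('q) ^ (d - 2)"
    and m: "m \<in> M" "zef_coords m = (0, 1, 0)" and m': "m' \<in> M"
  shows "m' 2 = 0"
proof -
  define u where "u = m - e0v"
  have "m \<in> vecs d"
    using m(1) M_subset_vecs by blast
  then have "u \<in> Usp d"
    using m(2) e0v_vecs unfolding u_def by (simp add: Usp_iff vecs_diff zero_prod_def)
  moreover have "beta d a b c u u = 0"
    using m beta_M_eq_0[OF m(1) m(1)] beta_sym[of d a b c m e0v]
    by (simp add: u_def beta_diff_left beta_diff_right beta_e0v zef_coords_def)
  moreover have "\<forall>t\<in>M \<inter> Usp d. beta d a b c u t = 0"
    using m beta_M_eq_0 by (auto simp: u_def beta_diff_left beta_e0v Usp_def)
  ultimately have "u \<in> M"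
    by (rule singular_orthogonal_in_M[OF card])
  then have "e0v \<in> M"
    using lin_closed_diff[OF lin_closed_M m(1)] unfolding u_def by force
  then show ?thesis
    using beta_M_eq_0[OF _ m'] by (metis beta_e0v)
qed

end

definition zef_indep :: "(nat \<Rightarrow> 'a::field) list \<Rightarrow> bool" where
  "zef_indep ps \<longleftrightarrow> (\<forall>cs. zef_coords (lincomb cs ps) = 0 \<longrightarrow> (\<forall>j<length ps. cs j = 0))"

lemma zef_indep_units:
  assumes "zef_coords x = (1, 0, 0)" "zef_coords y = (0, 1, 0)" "zef_coords z = (0, 0, 1)"
  shows "zef_indep [x, y, z]"
  using assms
  by (auto simp: zef_indep_def lincomb_Cons zef_coords_def scalev_def zero_prod_def
      less_Suc_eq numeral_3_eq_3)

lemma zef_indep_pair: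
  assumes "zef_coords x = (1, x1, x2)" "zef_coords y = (0, y1, y2)"
    and "(x1, y1) = (0, 1) \<or> (x2, y2) = (0, 1)"
  shows "zef_indep [x, y]"
  using assms
  by (auto simp: zef_indep_def lincomb_Cons zef_coords_def scalev_def zero_prod_def
      less_Suc_eq numeral_2_eq_2)

lemma lin_indep_append_if_zef_indep:
  assumes ps: "zef_indep ps" and tb: "lin_indep tb" "set tb \<subseteq> Usp d"
  shows "lin_indep (ps @ tb)"
  unfolding lin_indep_def
proof (intro allI impI)
  fix cs j assume zero: "lincomb cs (ps @ tb) = (\<lambda>_. 0)" and j: "j < length (ps @ tb)"
  define cs' where "cs' = (\<lambda>j. cs (j + length ps))"
  have sum0: "lincomb cs ps + lincomb cs' tb = 0"
    using zero unfolding lincomb_append cs'_def by (simp add: zero_fun_def)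
  have "zef_coords (lincomb cs' tb) = 0"
    using lincomb_in_lin_closed[OF lin_closed_Usp tb(2)] by (simp add: Usp_iff)
  then have "zef_coords (lincomb cs ps) = 0"
    using arg_cong[OF sum0, of zef_coords] by (simp add: zef_coords_def zero_prod_def)
  then have ps0: "\<forall>j<length ps. cs j = 0"
    using ps unfolding zef_indep_def by blast
  then have "lincomb cs ps = 0"
    using lincomb_cong[of ps cs "\<lambda>_. 0"] by (simp add: lincomb_def zero_fun_def)
  then have "lincomb cs' tb = (\<lambda>_. 0)"
    using sum0 by (simp add: zero_fun_def)
  then have "\<forall>j<length tb. cs' j = 0"
    using tb(1) unfolding lin_indep_def by blast
  then show "cs j = 0"
    using ps0 j unfolding cs'_def by (metis add.commute length_append less_diff_conv2 not_le le_add_diff_inverse2)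
qed

locale maximal_subspace_U_basis = maximal_subspace a b c d M
  for a b c :: "'q::{field,finite}" and d M +
  fixes tb :: "(nat \<Rightarrow> 'q) list"
  assumes tb_indep: "lin_indep tb" and tb_span: "lspan tb = M \<inter> Usp d"
begin

lemma set_tb: "set tb \<subseteq> M \<inter> Usp d"
  using in_lspan tb_span by blast

lemma card_M_Int_Usp: "card (M \<inter> Usp d) = CARD('q) ^ length tb"
  using card_lspan[OF tb_indep] tb_span by simp

lemma length_tb_le: "length tb \<le> d - 2"
  using card_M_Int_Usp card_M_Int_Usp_le by (simp add: field_power_le_imp_le)

lemma card_zef_image: "card (zef_coords ` M) = CARD('q) ^ (d - length tb)"
proof -
  have "CARD('q) ^ (d - length tb) * CARD('q) ^ length tb
      = card (zef_coords ` M) * CARD('q) ^ length tb"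
    using card_M_eq_card_zef_image_mult card_M card_M_Int_Usp length_tb_le two_le_d
    by (simp flip: power_add)
  then show ?thesis
    by simp
qed

lemma rank_le_3: "d - length tb \<le> 3"
proof -
  have "card (zef_coords ` M) \<le> CARD('q \<times> 'q \<times> 'q)"
    by (rule card_mono) auto
  then have "CARD('q) ^ (d - length tb) \<le> CARD('q) ^ 3"
    using card_zef_image by (simp add: power3_eq_cube)
  then show ?thesis
    by (rule field_power_le_imp_le)
qed

lemma basis_from_zef_indep:
  assumes ps: "set ps \<subseteq> M" "length ps = d - length tb" "zef_indep ps"
  shows "is_basis_of (ps @ tb) M"
proof -
  have indep: "lin_indep (ps @ tb)"
    using ps(3) tb_indep set_tb by (intro lin_indep_append_if_zef_indep) auto
  have "lspan (ps @ tb) \<subseteq> M"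
    using ps(1) set_tb lin_closed_M by (intro lspan_subset) auto
  moreover have "card (lspan (ps @ tb)) = card M"
    using card_lspan[OF indep] card_M ps(2) length_tb_le two_le_d by simp
  ultimately show ?thesis
    using indep card_subset_eq[OF finite_M] by (simp add: is_basis_of_def)
qed

lemma standard_basis_from_zef_indep:
  assumes ps: "set ps \<subseteq> M" "length ps = d - length tb" "zef_indep ps"
    and hs: "length hs = length ps"
      "\<forall>i<length ps. hs ! i \<in> vecs d \<and> zef_coords (ps ! i) = zef_coords (hs ! i)"
  obtains u where "length (ps @ tb) = d" "is_basis_of (ps @ tb) M" "\<forall>i<d. u i \<in> Usp d"
    "\<forall>i<length ps. (ps @ tb) ! i = hs ! i + u i"
    "\<forall>i. length ps \<le> i \<and> i < d \<longrightarrow> (ps @ tb) ! i = u i"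
proof -
  let ?h = "\<lambda>i. if i < length ps then hs ! i else 0"
  have len: "length (ps @ tb) = d"
    using ps(2) length_tb_le two_le_d by simp
  have "(ps @ tb) ! i \<in> vecs d \<and> ?h i \<in> vecs d \<and> zef_coords ((ps @ tb) ! i) = zef_coords (?h i)"
    if "i < d" for i
  proof (cases "i < length ps")
    case True
    then have "ps ! i \<in> M"
      using ps(1) nth_mem by blast
    then show ?thesis
      using True hs M_subset_vecs by (auto simp: nth_append)
  next
    case False
    then have "(ps @ tb) ! i \<in> Usp d"
      using that len set_tb by (auto simp: nth_append)
    then show ?thesis
      using False by (simp add: Usp_iff vecs_def)
  qed
  then obtain u where u: "\<forall>i<d. u i \<in> Usp d" "\<forall>i<d. (ps @ tb) ! i = ?h i + u i"
    using exists_Usp_offsets[of d "ps @ tb" ?h] by blast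
  moreover have "\<forall>i<length ps. (ps @ tb) ! i = hs ! i + u i"
    using u(2) ps(2) by auto
  moreover have "\<forall>i. length ps \<le> i \<and> i < d \<longrightarrow> (ps @ tb) ! i = u i"
    using u(2) by auto
  ultimately show thesis
    using that len basis_from_zef_indep[OF ps] by blast
qed

lemma zef_image_eq_UNIV:
  assumes "length tb + 3 = d"
  shows "zef_coords ` M = UNIV"
proof -
  have "d - length tb = 3"
    using assms by simp
  then have "card (zef_coords ` M) = CARD('q \<times> 'q \<times> 'q)"
    using card_zef_image by (simp add: power3_eq_cube)
  then show ?thesis
    by (intro card_subset_eq) auto
qed

lemma form_i:
  assumes rank: "length tb + 3 = d"
  shows "\<exists>bs. length bs = d \<and> is_basis_of bs M \<and> (\<exists>u. (\<forall>i<d. u i \<in> Usp d) \<and>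
    3 \<le> d \<and> bs ! 0 = zv + u 0 \<and> bs ! 1 = e0v + u 1 \<and> bs ! 2 = f0v + u 2 \<and>
    (\<forall>i. 3 \<le> i \<and> i < d \<longrightarrow> bs ! i = u i))"
proof -
  have "\<exists>m\<in>M. zef_coords m = t" for t
    using zef_image_eq_UNIV[OF rank] by (metis UNIV_I imageE)
  then obtain m1 m2 m3 where m: "m1 \<in> M" "m2 \<in> M" "m3 \<in> M"
    "zef_coords m1 = (1, 0, 0)" "zef_coords m2 = (0, 1, 0)" "zef_coords m3 = (0, 0, 1)"
    by meson
  let ?ps = "[m1, m2, m3]" and ?hs = "[zv, e0v, f0v] :: (nat \<Rightarrow> 'q) list"
  have hs: "length ?hs = length ?ps"
    "\<forall>i<length ?ps. ?hs ! i \<in> vecs d \<and> zef_coords (?ps ! i) = zef_coords (?hs ! i)"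
    using m zv_vecs e0v_vecs f0v_vecs by (simp_all add: less_Suc_eq numeral_3_eq_3)
  have ps: "set ?ps \<subseteq> M" "length ?ps = d - length tb"
    using m rank by auto
  obtain u where B: "length (?ps @ tb) = d" "is_basis_of (?ps @ tb) M"
    and u: "\<forall>i<d. u i \<in> Usp d" "\<forall>i<length ?ps. (?ps @ tb) ! i = ?hs ! i + u i"
      "\<forall>i. length ?ps \<le> i \<and> i < d \<longrightarrow> (?ps @ tb) ! i = u i"
    using standard_basis_from_zef_indep[OF ps zef_indep_units[OF m(4-6)] hs] by blast
  have "(?ps @ tb) ! 0 = zv + u 0" "(?ps @ tb) ! 1 = e0v + u 1" "(?ps @ tb) ! 2 = f0v + u 2"
    using u(2)[rule_format, of 0] u(2)[rule_format, of 1] u(2)[rule_format, of 2] by simp_all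
  moreover have "3 \<le> d"
    using rank by simp
  moreover have "\<forall>i. 3 \<le> i \<and> i < d \<longrightarrow> (?ps @ tb) ! i = u i"
    using u(3) by simp
  ultimately show ?thesis
    using B u(1) by blast
qed

text \<open>Otherwise the projection of M onto \<langle>e_0, f_0\<rangle> is surjective, which contradicts
  e0_lift_imp_f0_coord_eq_0.\<close>

lemma exists_z_coord:
  assumes rank: "length tb + 2 = d"
  shows "\<exists>m\<in>M. m 0 \<noteq> 0"
proof (rule ccontr)
  assume "\<not> (\<exists>m\<in>M. m 0 \<noteq> 0)"
  then have "zef_coords ` M \<subseteq> {0} \<times> UNIV"
    by (auto simp: zef_coords_def)
  moreover have "d - length tb = 2"
    using rank by simp
  then have "card ({0::'q} \<times> (UNIV :: ('q \<times> 'q) set)) = card (zef_coords ` M)"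
    using card_zef_image by (simp add: card_cartesian_product power2_eq_square)
  ultimately have "zef_coords ` M = {0} \<times> UNIV"
    by (intro card_subset_eq) auto
  then have "(0, 1, 0) \<in> zef_coords ` M" "(0, 0, 1) \<in> zef_coords ` M"
    by simp_all
  then obtain m1 m2 where "m1 \<in> M" "zef_coords m1 = (0, 1, 0)" "m2 \<in> M" "zef_coords m2 = (0, 0, 1)"
    by (elim imageE) simp
  moreover have "length tb = d - 2"
    using rank by simp
  then have "card (M \<inter> Usp d) = CARD('q) ^ (d - 2)"
    using card_M_Int_Usp by simp
  ultimately show False
    using e0_lift_imp_f0_coord_eq_0[of m1 m2] by (simp add: zef_coords_def)
qed

lemma exists_pivot_pair:
  assumes rank: "length tb + 2 = d"
  obtains p r where "p \<in> M" "r \<in> M" "p 0 = 1" "r 0 = 0" "r 1 \<noteq> 0 \<or> r 2 \<noteq> 0"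
proof -
  obtain m where m: "m \<in> M" "m 0 \<noteq> 0"
    using exists_z_coord[OF rank] by blast
  define p where "p = scalev (1 / m 0) m"
  have p: "p \<in> M" "p 0 = 1"
    using m lin_closed_scalev[OF lin_closed_M] unfolding p_def by (blast, simp add: scalev_def)
  let ?line = "range (\<lambda>s. zef_coords (scalev s p))"
  have "card ?line \<le> CARD('q) ^ 1"
    using card_image_le[of UNIV "\<lambda>s. zef_coords (scalev s p)"] by simp
  also have "\<dots> < CARD('q) ^ (d - length tb)"
    using one_less_card_field[where 'a='q] rank by (intro power_strict_increasing) auto
  finally have "\<not> zef_coords ` M \<subseteq> ?line"
    using card_mono[of ?line "zef_coords ` M"] card_zef_image by auto
  then obtain m' where m': "m' \<in> M" "zef_coords m' \<notin> ?line"
    by blast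
  define r where "r = m' - scalev (m' 0) p"
  have "r \<in> M"
    using m'(1) p(1) lin_closed_diff[OF lin_closed_M] lin_closed_scalev[OF lin_closed_M]
    unfolding r_def by blast
  moreover have "r 0 = 0"
    using p(2) unfolding r_def by (simp add: scalev_def)
  moreover have "r 1 \<noteq> 0 \<or> r 2 \<noteq> 0"
  proof (rule ccontr)
    assume "\<not> (r 1 \<noteq> 0 \<or> r 2 \<noteq> 0)"
    then have "zef_coords m' = zef_coords (scalev (m' 0) p)"
      using p(2) unfolding r_def by (simp add: zef_coords_def scalev_def)
    then show False
      using m'(2) by blast
  qed
  ultimately show thesis
    using that p by blast
qed

lemma basis_from_pair:
  assumes rank: "length tb + 2 = d"
    and xy: "x \<in> M" "y \<in> M" "zef_indep [x, y]"
    and hk: "h \<in> vecs d" "k \<in> vecs d" "zef_coords x = zef_coords h" "zef_coords y = zef_coords k"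
  shows "\<exists>bs. length bs = d \<and> is_basis_of bs M \<and> (\<exists>u. (\<forall>i<d. u i \<in> Usp d) \<and>
    bs ! 0 = h + u 0 \<and> bs ! 1 = k + u 1 \<and> (\<forall>i. 2 \<le> i \<and> i < d \<longrightarrow> bs ! i = u i))"
proof -
  have hs: "length [h, k] = length [x, y]"
    "\<forall>i<length [x, y]. [h, k] ! i \<in> vecs d \<and> zef_coords ([x, y] ! i) = zef_coords ([h, k] ! i)"
    using hk by (simp_all add: less_Suc_eq numeral_2_eq_2)
  have ps: "set [x, y] \<subseteq> M" "length [x, y] = d - length tb"
    using xy rank by auto
  obtain u where B: "length ([x, y] @ tb) = d" "is_basis_of ([x, y] @ tb) M"
    and u: "\<forall>i<d. u i \<in> Usp d" "\<forall>i<length [x, y]. ([x, y] @ tb) ! i = [h, k] ! i + u i"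
      "\<forall>i. length [x, y] \<le> i \<and> i < d \<longrightarrow> ([x, y] @ tb) ! i = u i"
    using standard_basis_from_zef_indep[OF ps xy(3) hs] by blast
  have "([x, y] @ tb) ! 0 = h + u 0" "([x, y] @ tb) ! 1 = k + u 1"
    using u(2)[rule_format, of 0] u(2)[rule_format, of 1] by simp_all
  moreover have "\<forall>i. 2 \<le> i \<and> i < d \<longrightarrow> ([x, y] @ tb) ! i = u i"
    using u(3) by simp
  ultimately show ?thesis
    using B u(1) by blast
qed

lemma form_ii:
  assumes rank: "length tb + 2 = d"
    and pr: "p \<in> M" "r \<in> M" "p 0 = 1" "r 0 = 0" and r1: "r 1 \<noteq> 0"
  shows "\<exists>bs. length bs = d \<and> is_basis_of bs M \<and> (\<exists>u. (\<forall>i<d. u i \<in> Usp d) \<and>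
    (\<exists>lam mu. bs ! 0 = zv + scalev lam f0v + u 0 \<and> bs ! 1 = e0v + scalev mu f0v + u 1 \<and>
      (\<forall>i. 2 \<le> i \<and> i < d \<longrightarrow> bs ! i = u i)))"
proof -
  define y where "y = scalev (1 / r 1) r"
  define x where "x = p - scalev (p 1) y"
  have "x \<in> M" "y \<in> M"
    using pr lin_closed_diff[OF lin_closed_M] lin_closed_scalev[OF lin_closed_M]
    unfolding x_def y_def by blast+
  moreover have "zef_coords x = (1, 0, x 2)" "zef_coords y = (0, 1, y 2)"
    using pr r1 unfolding x_def y_def by (simp_all add: zef_coords_def scalev_def)
  ultimately have "\<exists>bs. length bs = d \<and> is_basis_of bs M \<and> (\<exists>u. (\<forall>i<d. u i \<in> Usp d) \<and>
      bs ! 0 = zv + scalev (x 2) f0v + u 0 \<and> bs ! 1 = e0v + scalev (y 2) f0v + u 1 \<and>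
      (\<forall>i. 2 \<le> i \<and> i < d \<longrightarrow> bs ! i = u i))"
    using zef_indep_pair[of x 0 "x 2" y 1 "y 2"] zv_vecs e0v_vecs f0v_vecs
    by (intro basis_from_pair[OF rank]) (simp_all add: vecs_add vecs_scalev)
  then show ?thesis
    by blast
qed

lemma form_iii:
  assumes rank: "length tb + 2 = d"
    and pr: "p \<in> M" "r \<in> M" "p 0 = 1" "r 0 = 0" and r12: "r 1 = 0" "r 2 \<noteq> 0"
  shows "\<exists>bs. length bs = d \<and> is_basis_of bs M \<and> (\<exists>u. (\<forall>i<d. u i \<in> Usp d) \<and>
    (\<exists>lam. bs ! 0 = zv + scalev lam e0v + u 0 \<and> bs ! 1 = f0v + u 1 \<and>
      (\<forall>i. 2 \<le> i \<and> i < d \<longrightarrow> bs ! i = u i)))"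
proof -
  define y where "y = scalev (1 / r 2) r"
  define x where "x = p - scalev (p 2) y"
  have "x \<in> M" "y \<in> M"
    using pr lin_closed_diff[OF lin_closed_M] lin_closed_scalev[OF lin_closed_M]
    unfolding x_def y_def by blast+
  moreover have "zef_coords x = (1, x 1, 0)" "zef_coords y = (0, 0, 1)"
    using pr r12 unfolding x_def y_def by (simp_all add: zef_coords_def scalev_def)
  ultimately have "\<exists>bs. length bs = d \<and> is_basis_of bs M \<and> (\<exists>u. (\<forall>i<d. u i \<in> Usp d) \<and>
      bs ! 0 = zv + scalev (x 1) e0v + u 0 \<and> bs ! 1 = f0v + u 1 \<and>
      (\<forall>i. 2 \<le> i \<and> i < d \<longrightarrow> bs ! i = u i))"
    using zef_indep_pair[of x "x 1" 0 y 0 1] zv_vecs e0v_vecs f0v_vecs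
    by (intro basis_from_pair[OF rank]) (simp_all add: vecs_add vecs_scalev)
  then show ?thesis
    by blast
qed

end

theorem lemma3p8:
  fixes a b c :: "'q::{field,finite}"
    and d :: nat
    and M :: "(nat \<Rightarrow> 'q) set"
  assumes "odd (card (UNIV :: 'q set))"
    and "2 \<le> d"
    and "anisotropic_plane a b c"
    and "is_maximal d a b c M"
  shows "\<exists>bs. length bs = d \<and> is_basis_of bs M \<and>
    (\<exists>u. (\<forall>i<d. u i \<in> Usp d) \<and>
      ((3 \<le> d \<and> bs ! 0 = zv + u 0 \<and> bs ! 1 = e0v + u 1 \<and> bs ! 2 = f0v + u 2 \<and>
          (\<forall>i. 3 \<le> i \<and> i < d \<longrightarrow> bs ! i = u i))
       \<or> (\<exists>lam mu. bs ! 0 = zv + scalev lam f0v + u 0 \<and> bs ! 1 = e0v + scalev mu f0v + u 1 \<and>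
          (\<forall>i. 2 \<le> i \<and> i < d \<longrightarrow> bs ! i = u i))
       \<or> (\<exists>lam. bs ! 0 = zv + scalev lam e0v + u 0 \<and> bs ! 1 = f0v + u 1 \<and>
          (\<forall>i. 2 \<le> i \<and> i < d \<longrightarrow> bs ! i = u i))))"
proof -
  interpret maximal_subspace a b c d M
    using assms by unfold_locales
  obtain tb where "lin_indep tb" "lspan tb = M \<inter> Usp d"
    using lin_closed_has_basis[OF _ lin_closed_M_Int_Usp] finite_M by blast
  then interpret maximal_subspace_U_basis a b c d M tb
    by unfold_locales
  consider "length tb + 3 = d" | "length tb + 2 = d"
    using rank_le_3 length_tb_le two_le_d by linarith
  then show ?thesis
  proof cases
    case 1
    then show ?thesis
      using form_i by blast
  next
    case 2
    then obtain p r where pr: "p \<in> M" "r \<in> M" "p 0 = 1" "r 0 = 0" "r 1 \<noteq> 0 \<or> r 2 \<noteq> 0"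
      by (rule exists_pivot_pair)
    then show ?thesis
      using form_ii[OF 2 pr(1-4)] form_iii[OF 2 pr(1-4)] by blast
  qed
qed

end
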